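(* In the setting below, if $\mathbb{P}(\tilde W^-_0>f(0))=1$, then $p_-+p_+=1$.
   Context: All Brownian motions have a common variance $\sigma^2>0$ per unit time. Let $f:[-1,1]\to\mathbb{R}$ be continuous with $f(0)=0$. Let $W^-$ be a Brownian motion on $[-1,1]$ and define $\tilde W^-_t=\sup_{-1\le s\le t}(f(s)+W^-_t-W^-_s)$ for $t\in[-1,0]$ (Brownian motion started at $f(-1)$ reflected above $f$); on $[0,1]$, $\tilde W^-_t=\tilde W^-_0+W^-_t-W^-_0$ for $t\le\sigma_-\wedge1$ where $\sigma_-=\inf\{t\ge0:\tilde W^-_t=f(t)\}$, and $\tilde W^-_t=f(t)$ for $t\ge\sigma_-$. Let $p_-=\mathbb{P}(\sigma_-<1)$. Symmetrically, with a Brownian motion $W^+$ on $[-1,1]$, let $\tilde W^+_t=\sup_{t\le s\le1}(f(s)+W^+_t-W^+_s)$ for $t\in[0,1]$, and on $[-1,0]$, $\tilde W^+_t=\tilde W^+_0+W^+_t-W^+_0$ for $t\ge\sigma_+$ where $\sigma_+=\sup\{t\le0:\tilde W^+_t=f(t)\}$, absorbed into $f$ before $\sigma_+$. Let $p_+=\mathbb{P}(\sigma_+>-1)$. *)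

theory Defs
  imports "HOL-Probability.Probability"
begin

text \<open>The starting value is arbitrary.\<close>
definition brownian_motion_on ::
  "'a measure \<Rightarrow> real \<Rightarrow> real \<Rightarrow> real \<Rightarrow> (real \<Rightarrow> 'a \<Rightarrow> real) \<Rightarrow> bool" where
  "brownian_motion_on M v a b W \<longleftrightarrow>
     prob_space M \<and>
     (\<forall>t\<in>{a..b}. W t \<in> borel_measurable M) \<and>
     (\<forall>\<omega>\<in>space M. continuous_on {a..b} (\<lambda>t. W t \<omega>)) \<and>
     (\<forall>s t. a \<le> s \<and> s < t \<and> t \<le> b \<longrightarrow>
        distributed M lborel (\<lambda>\<omega>. W t \<omega> - W s \<omega>) (normal_density 0 (sqrt (v * (t - s))))) \<and>
     (\<forall>ts :: real list. sorted ts \<and> set ts \<subseteq> {a..b} \<longrightarrow>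
        prob_space.indep_vars M (\<lambda>_. borel)
          (\<lambda>i \<omega>. W (ts ! Suc i) \<omega> - W (ts ! i) \<omega>) {..<length ts - 1})"

text \<open>Value at time 0 of the Brownian motion reflected above f on [-1,0]
  (tilde W^-_0 = sup_{-1 <= s <= 0} (f s + W_0 - W_s)).\<close>
definition reflMinus0 :: "(real \<Rightarrow> real) \<Rightarrow> (real \<Rightarrow> 'a \<Rightarrow> real) \<Rightarrow> 'a \<Rightarrow> real" where
  "reflMinus0 f W \<omega> = (SUP s\<in>{-1..0}. f s + W 0 \<omega> - W s \<omega>)"

text \<open>sigma_- = inf {t >= 0 : tilde W^-_t = f t} (within the time horizon [0,1]),
  where on [0, sigma_-] tilde W^-_t = tilde W^-_0 + W_t - W_0; inf of the empty set is +infinity.\<close>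
definition sigmaMinus :: "(real \<Rightarrow> real) \<Rightarrow> (real \<Rightarrow> 'a \<Rightarrow> real) \<Rightarrow> 'a \<Rightarrow> ereal" where
  "sigmaMinus f W \<omega> =
     (INF t\<in>{t\<in>{0..1}. reflMinus0 f W \<omega> + W t \<omega> - W 0 \<omega> = f t}. ereal t)"

text \<open>Value at time 0 of the Brownian motion reflected above f backwards from time 1
  (tilde W^+_0 = sup_{0 <= s <= 1} (f s + W_0 - W_s)).\<close>
definition reflPlus0 :: "(real \<Rightarrow> real) \<Rightarrow> (real \<Rightarrow> 'a \<Rightarrow> real) \<Rightarrow> 'a \<Rightarrow> real" where
  "reflPlus0 f W \<omega> = (SUP s\<in>{0..1}. f s + W 0 \<omega> - W s \<omega>)"

text \<open>sigma_+ = sup {t <= 0 : tilde W^+_t = f t} (within [-1,0]), where on [sigma_+, 0]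
  tilde W^+_t = tilde W^+_0 + W_t - W_0; sup of the empty set is -infinity.\<close>
definition sigmaPlus :: "(real \<Rightarrow> real) \<Rightarrow> (real \<Rightarrow> 'a \<Rightarrow> real) \<Rightarrow> 'a \<Rightarrow> ereal" where
  "sigmaPlus f W \<omega> =
     (SUP t\<in>{t\<in>{-1..0}. reflPlus0 f W \<omega> + W t \<omega> - W 0 \<omega> = f t}. ereal t)"

end

theory Submission
  imports Defs
begin

text \<open>Write g t = f t - (W t - W 0) for the gap between the barrier and the free path. The value of
  the reflected path at time 0 is A = sup g over [-1,0], and sigma_- < 1 says that g returns to the
  level A during [0,1). As g 0 = f 0 \<le> A, continuity gives
  {B > A} \<subseteq> {sigma_- < 1} \<subseteq> {B \<ge> A} with B = sup g over [0,1], and symmetrically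
  {A > B} \<subseteq> {sigma_+ > -1} \<subseteq> {A \<ge> B} for the second motion.

  The joint law of (A, B) is the same for both motions: the maxima of g over dyadic grids increase
  to A and B and are functions of finitely many independent Gaussian increments. Ties are null: on
  {A > f 0} a tie forces sup g over [d,1] to equal A for small d, and the difference of these two
  suprema is a variable independent of the Gaussian W d - W 0 minus W d - W 0, which has no atoms.
  Hence p_- = P(B > A) and p_+ = P(A > B) add up to 1.\<close>

section \<open>Suprema of continuous functions on intervals\<close>

lemma compact_bdd_above_image:
  fixes g :: "'a::topological_space \<Rightarrow> real"
  assumes "compact S" "continuous_on S g"
  shows "bdd_above (g ` S)"
  by (meson assms compact_continuous_image compact_imp_bounded bounded_imp_bdd_above)

lemma compact_le_SUP:
  fixes g :: "'a::topological_space \<Rightarrow> real"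
  assumes "compact S" "continuous_on S g" "t \<in> S"
  shows "g t \<le> (SUP s\<in>S. g s)"
  using assms by (intro cSUP_upper compact_bdd_above_image)

lemma compact_SUP_attained:
  fixes g :: "'a::topological_space \<Rightarrow> real"
  assumes "compact S" "S \<noteq> {}" "continuous_on S g"
  obtains t where "t \<in> S" "g t = (SUP s\<in>S. g s)"
proof -
  obtain t where t: "t \<in> S" "\<And>s. s \<in> S \<Longrightarrow> g s \<le> g t"
    using continuous_attains_sup[OF assms] by blast
  have "(SUP s\<in>S. g s) = g t"
    using t by (intro antisym cSUP_least compact_le_SUP assms) auto
  with t that show ?thesis by simp
qed

lemma compact_SUP_subset_mono:
  fixes g :: "'a::topological_space \<Rightarrow> real"
  assumes "compact T" "continuous_on T g" "S \<noteq> {}" "S \<subseteq> T"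
  shows "(SUP s\<in>S. g s) \<le> (SUP t\<in>T. g t)"
  using assms by (intro cSUP_subset_mono compact_bdd_above_image) auto

lemma Icc_SUP_split:
  fixes g :: "real \<Rightarrow> real"
  assumes "a \<le> d" "d \<le> b" and cont: "continuous_on {a..b} g"
  shows "(SUP t\<in>{a..b}. g t) = max (SUP t\<in>{a..d}. g t) (SUP t\<in>{d..b}. g t)"
proof -
  have "bdd_above (g ` {a..d})" "bdd_above (g ` {d..b})"
    using assms by (auto intro!: compact_bdd_above_image continuous_on_subset[OF cont])
  moreover have "{a..b} = {a..d} \<union> {d..b}"
    using assms by auto
  ultimately show ?thesis
    using assms by (simp add: cSUP_union sup_max)
qed

lemma Icc_SUP_shrink_tendsto:
  fixes g :: "real \<Rightarrow> real"
  assumes cont: "continuous_on {a..b} g" and d: "\<And>k. d k \<in> {a..b}" and lim: "d \<longlonglongrightarrow> a"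
  shows "(\<lambda>k. SUP t\<in>{a..d k}. g t) \<longlonglongrightarrow> g a"
proof -
  have "\<exists>m. m \<in> {a..d k} \<and> g m = (SUP t\<in>{a..d k}. g t)" for k
  proof -
    have "{a..d k} \<noteq> {}" "continuous_on {a..d k} g"
      using d[of k] by (auto intro: continuous_on_subset[OF cont])
    then show ?thesis
      using compact_SUP_attained[OF compact_Icc] by metis
  qed
  then obtain m where m: "\<And>k. m k \<in> {a..d k}" "\<And>k. g (m k) = (SUP t\<in>{a..d k}. g t)"
    by metis
  have "m \<longlonglongrightarrow> a"
    using m(1) by (intro tendsto_sandwich[OF always_eventually always_eventually tendsto_const lim]) auto
  moreover have "m k \<in> {a..b}" "a \<in> {a..b}" for k
    using m(1)[of k] d[of k] d[of 0] by auto
  ultimately have "(\<lambda>k. g (m k)) \<longlonglongrightarrow> g a"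
    by (intro continuous_on_tendsto_compose[OF cont] always_eventually) auto
  then show ?thesis
    using m(2) by simp
qed

lemma Icc_level_attained:
  fixes g :: "real \<Rightarrow> real"
  assumes cont: "continuous_on {a..b} g" and x: "x \<in> {a..b}" "g x \<le> y"
    and y: "y \<le> (SUP s\<in>{a..b}. g s)"
  obtains t where "t \<in> {a..b}" "g t = y"
proof -
  obtain m where m: "m \<in> {a..b}" "g m = (SUP s\<in>{a..b}. g s)"
    using compact_SUP_attained[OF compact_Icc _ cont] x(1) by blast
  have "connected (g ` {a..b})"
    by (rule connected_continuous_image[OF cont connected_Icc])
  moreover have "g x \<in> g ` {a..b}" "g m \<in> g ` {a..b}"
    using x(1) m(1) by auto
  ultimately have "y \<in> g ` {a..b}"
    using x(2) y m(2) by (auto intro: connectedD_interval)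
  with that show ?thesis by blast
qed

lemma hits_level_before_end:
  fixes g :: "real \<Rightarrow> real"
  assumes "a < c" and cont: "continuous_on {a..c} g" and "g a \<le> y" "y < (SUP s\<in>{a..c}. g s)"
  shows "\<exists>t. a \<le> t \<and> t < c \<and> g t = y"
proof -
  obtain m where m: "m \<in> {a..c}" "g m = (SUP s\<in>{a..c}. g s)"
    using compact_SUP_attained[OF compact_Icc _ cont] assms(1) by auto
  have cont': "continuous_on {a..m} g"
    using m(1) by (intro continuous_on_subset[OF cont]) auto
  have "y \<le> (SUP s\<in>{a..m}. g s)"
    using assms m compact_le_SUP[OF compact_Icc cont', of m] by auto
  then obtain t where "t \<in> {a..m}" "g t = y"
    using Icc_level_attained[OF cont', of a] assms m by auto
  moreover have "t \<noteq> m" using calculation assms m by auto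
  ultimately show ?thesis using m by auto
qed

lemma hits_level_after_start:
  fixes g :: "real \<Rightarrow> real"
  assumes "c < a" and cont: "continuous_on {c..a} g" and "g a \<le> y" "y < (SUP s\<in>{c..a}. g s)"
  shows "\<exists>t. c < t \<and> t \<le> a \<and> g t = y"
proof -
  obtain m where m: "m \<in> {c..a}" "g m = (SUP s\<in>{c..a}. g s)"
    using compact_SUP_attained[OF compact_Icc _ cont] assms(1) by auto
  have cont': "continuous_on {m..a} g"
    using m(1) by (intro continuous_on_subset[OF cont]) auto
  have "y \<le> (SUP s\<in>{m..a}. g s)"
    using assms m compact_le_SUP[OF compact_Icc cont', of m] by auto
  then obtain t where "t \<in> {m..a}" "g t = y"
    using Icc_level_attained[OF cont', of a] assms m by auto
  moreover have "t \<noteq> m" using calculation assms m by auto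
  ultimately have "c < t" "t \<le> a" "g t = y" using m by auto
  then show ?thesis by blast
qed

text \<open>Countable reformulations of the hitting events; they make the events measurable.\<close>

lemma hits_level_before_iff:
  fixes g :: "real \<Rightarrow> real"
  assumes "a < c" and cont: "continuous_on {a..c} g" and "g a \<le> y"
  shows "(\<exists>t. a \<le> t \<and> t < c \<and> g t = y) \<longleftrightarrow>
         (\<exists>k::nat. y \<le> (SUP s\<in>{a..c - (c - a) / (real k + 2)}. g s))"
proof
  assume "\<exists>t. a \<le> t \<and> t < c \<and> g t = y"
  then obtain t where t: "a \<le> t" "t < c" "g t = y" by blast
  obtain k :: nat where k: "(c - a) / (c - t) < real k"
    using reals_Archimedean2 by blast
  then have "c - a < real k * (c - t)"
    using t(2) by (simp add: field_simps)
  also have "\<dots> \<le> (real k + 2) * (c - t)"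
    using t(2) by (intro mult_right_mono) auto
  finally have "t \<in> {a..c - (c - a) / (real k + 2)}"
    using t by (simp add: field_simps)
  moreover from this have "continuous_on {a..c - (c - a) / (real k + 2)} g"
    using assms(1) by (intro continuous_on_subset[OF cont]) auto
  ultimately show "\<exists>k::nat. y \<le> (SUP s\<in>{a..c - (c - a) / (real k + 2)}. g s)"
    using t(3) compact_le_SUP[OF compact_Icc] by blast
next
  assume "\<exists>k::nat. y \<le> (SUP s\<in>{a..c - (c - a) / (real k + 2)}. g s)"
  then obtain k :: nat where k: "y \<le> (SUP s\<in>{a..c - (c - a) / (real k + 2)}. g s)" by blast
  define r where "r = c - (c - a) / (real k + 2)"
  have "c - a \<le> (c - a) * (real k + 2)"
    using assms(1) mult_nonneg_nonneg[of "c - a" "real k"] by (simp add: algebra_simps)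
  then have "(c - a) / (real k + 2) \<le> c - a"
    by (simp add: pos_divide_le_eq)
  moreover have "(c - a) / (real k + 2) > 0"
    using assms(1) by simp
  ultimately have r: "a \<le> r" "r < c"
    by (auto simp: r_def)
  have "continuous_on {a..r} g"
    using r by (intro continuous_on_subset[OF cont]) auto
  then obtain t where "t \<in> {a..r}" "g t = y"
    using Icc_level_attained[of a r g a y] k assms(3) r unfolding r_def[symmetric] by auto
  with r show "\<exists>t. a \<le> t \<and> t < c \<and> g t = y" by auto
qed

lemma hits_level_after_iff:
  fixes g :: "real \<Rightarrow> real"
  assumes "c < a" and cont: "continuous_on {c..a} g" and "g a \<le> y"
  shows "(\<exists>t. c < t \<and> t \<le> a \<and> g t = y) \<longleftrightarrow>
         (\<exists>k::nat. y \<le> (SUP s\<in>{c + (a - c) / (real k + 2)..a}. g s))"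
proof
  assume "\<exists>t. c < t \<and> t \<le> a \<and> g t = y"
  then obtain t where t: "c < t" "t \<le> a" "g t = y" by blast
  obtain k :: nat where k: "(a - c) / (t - c) < real k"
    using reals_Archimedean2 by blast
  then have "a - c < real k * (t - c)"
    using t(1) by (simp add: field_simps)
  also have "\<dots> \<le> (real k + 2) * (t - c)"
    using t(1) by (intro mult_right_mono) auto
  finally have "t \<in> {c + (a - c) / (real k + 2)..a}"
    using t by (simp add: field_simps)
  moreover from this have "continuous_on {c + (a - c) / (real k + 2)..a} g"
    using assms(1) by (intro continuous_on_subset[OF cont]) auto
  ultimately show "\<exists>k::nat. y \<le> (SUP s\<in>{c + (a - c) / (real k + 2)..a}. g s)"
    using t(3) compact_le_SUP[OF compact_Icc] by blast
next
  assume "\<exists>k::nat. y \<le> (SUP s\<in>{c + (a - c) / (real k + 2)..a}. g s)"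
  then obtain k :: nat where k: "y \<le> (SUP s\<in>{c + (a - c) / (real k + 2)..a}. g s)" by blast
  define r where "r = c + (a - c) / (real k + 2)"
  have "a - c \<le> (a - c) * (real k + 2)"
    using assms(1) mult_nonneg_nonneg[of "a - c" "real k"] by (simp add: algebra_simps)
  then have "(a - c) / (real k + 2) \<le> a - c"
    by (simp add: pos_divide_le_eq)
  moreover have "(a - c) / (real k + 2) > 0"
    using assms(1) by simp
  ultimately have r: "r \<le> a" "c < r"
    by (auto simp: r_def)
  have "continuous_on {r..a} g"
    using r by (intro continuous_on_subset[OF cont]) auto
  then obtain t where "t \<in> {r..a}" "g t = y"
    using Icc_level_attained[of r a g a y] k assms(3) r unfolding r_def[symmetric] by auto
  with r show "\<exists>t. c < t \<and> t \<le> a \<and> g t = y" by (intro exI[of _ t]) auto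
qed

section \<open>Dyadic approximation of suprema\<close>

definition dyadic_point :: "real \<Rightarrow> real \<Rightarrow> nat \<Rightarrow> nat \<Rightarrow> real" where
  "dyadic_point a b n j = a + real j * (b - a) / 2^n"

definition dyadic_max :: "(real \<Rightarrow> real) \<Rightarrow> real \<Rightarrow> real \<Rightarrow> nat \<Rightarrow> real" where
  "dyadic_max g a b n = Max ((\<lambda>j. g (dyadic_point a b n j)) ` {..2^n})"

lemma dyadic_point_0 [simp]: "dyadic_point a b n 0 = a"
  by (simp add: dyadic_point_def)

lemma dyadic_point_last [simp]: "dyadic_point a b n (2^n) = b"
  by (simp add: dyadic_point_def)

lemma dyadic_point_double: "dyadic_point a b (Suc n) (2 * j) = dyadic_point a b n j"
  by (simp add: dyadic_point_def)

lemma dyadic_point_strict_mono: "a < b \<Longrightarrow> j < k \<Longrightarrow> dyadic_point a b n j < dyadic_point a b n k"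
  by (simp add: dyadic_point_def divide_strict_right_mono mult_strict_right_mono)

lemma dyadic_point_mem:
  assumes "a \<le> b" "j \<le> 2^n"
  shows "dyadic_point a b n j \<in> {a..b}"
proof -
  have "real j \<le> 2^n"
    using assms(2) by (metis of_nat_le_iff of_nat_numeral of_nat_power)
  then have "real j * (b - a) \<le> 2^n * (b - a)"
    using assms(1) by (intro mult_right_mono) auto
  then have "real j * (b - a) / 2^n \<le> b - a"
    by (simp add: pos_divide_le_eq mult.commute)
  moreover have "0 \<le> real j * (b - a) / 2^n"
    using assms(1) by simp
  ultimately show ?thesis
    by (simp add: dyadic_point_def)
qed

lemma dyadic_point_halves:
  "dyadic_point a (2 * b - a) (Suc n) j = dyadic_point a b n j"
  "dyadic_point a (2 * b - a) (Suc n) (2^n + k) = dyadic_point b (2 * b - a) n k"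
  by (simp_all add: dyadic_point_def field_simps)

lemma dyadic_max_incseq: "incseq (dyadic_max g a b)"
proof (rule incseq_SucI)
  fix n
  have "(\<lambda>j. g (dyadic_point a b n j)) ` {..2^n} \<subseteq> (\<lambda>j. g (dyadic_point a b (Suc n) j)) ` {..2^Suc n}"
  proof
    fix y assume "y \<in> (\<lambda>j. g (dyadic_point a b n j)) ` {..2^n}"
    then obtain j where "j \<le> 2^n" "y = g (dyadic_point a b n j)" by auto
    then show "y \<in> (\<lambda>j. g (dyadic_point a b (Suc n) j)) ` {..2^Suc n}"
      by (intro image_eqI[of _ _ "2 * j"]) (auto simp: dyadic_point_double)
  qed
  then show "dyadic_max g a b n \<le> dyadic_max g a b (Suc n)"
    unfolding dyadic_max_def by (intro Max_mono) auto
qed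

lemma dyadic_max_le_SUP:
  assumes "a \<le> b" "continuous_on {a..b} g"
  shows "dyadic_max g a b n \<le> (SUP t\<in>{a..b}. g t)"
  unfolding dyadic_max_def using assms dyadic_point_mem
  by (subst Max_le_iff) (auto intro!: compact_le_SUP)

lemma dyadic_round_down:
  assumes "a \<le> b" "t \<in> {a..b}"
  obtains j where "\<And>n. j n \<le> 2^n" "(\<lambda>n. dyadic_point a b n (j n)) \<longlonglongrightarrow> t"
proof -
  define j where "j n = nat \<lfloor>(t - a) * 2^n / (b - a)\<rfloor>" for n
  have close: "j n \<le> 2^n \<and> dyadic_point a b n (j n) \<le> t \<and> t - (b - a) / 2^n \<le> dyadic_point a b n (j n)" for n
  proof (cases "a = b")
    case True
    then show ?thesis using assms by (simp add: j_def)
  next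
    case False
    define x where "x = (t - a) / (b - a) * 2^n"
    define \<delta> where "\<delta> = (b - a) / 2^n"
    have ba: "b - a > 0" using assms False by simp
    have \<delta>pos: "\<delta> > 0" using ba by (simp add: \<delta>_def)
    have "(t - a) / (b - a) \<le> 1" using assms ba by simp
    then have "x \<le> 1 * 2^n" unfolding x_def by (intro mult_right_mono) auto
    moreover have "0 \<le> x" using assms ba by (simp add: x_def)
    ultimately have x: "0 \<le> x" "x \<le> 2^n" by simp_all
    have jx: "real (j n) \<le> x" "x \<le> real (j n) + 1" using x by (auto simp: j_def x_def)
    have "real (j n) \<le> 2^n" using jx x by linarith
    then have "j n \<le> 2^n" by (metis of_nat_le_iff of_nat_numeral of_nat_power)
    moreover have "t = a + x * \<delta>" "dyadic_point a b n (j n) = a + real (j n) * \<delta>"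
      using ba by (simp_all add: x_def \<delta>_def dyadic_point_def)
    moreover have "real (j n) * \<delta> \<le> x * \<delta>" "x * \<delta> \<le> (real (j n) + 1) * \<delta>"
      using jx \<delta>pos by (simp_all add: mult_right_mono)
    ultimately show ?thesis unfolding \<delta>_def[symmetric] by (simp add: distrib_right)
  qed
  have "(\<lambda>n. (b - a) / 2^n) \<longlonglongrightarrow> 0"
    by (rule LIMSEQ_divide_realpow_zero) simp
  then have lower: "(\<lambda>n. t - (b - a) / 2^n) \<longlonglongrightarrow> t"
    using tendsto_diff[OF tendsto_const] by fastforce
  have "(\<lambda>n. dyadic_point a b n (j n)) \<longlonglongrightarrow> t"
    by (rule tendsto_sandwich[OF always_eventually always_eventually lower tendsto_const]) (use close in auto)
  with close that show ?thesis by blast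
qed

lemma dyadic_max_tendsto_SUP:
  assumes ab: "a \<le> b" and cont: "continuous_on {a..b} g"
  shows "dyadic_max g a b \<longlonglongrightarrow> (SUP t\<in>{a..b}. g t)"
proof -
  have "{a..b} \<noteq> {}" using ab by simp
  then obtain t where t: "t \<in> {a..b}" "g t = (SUP s\<in>{a..b}. g s)"
    by (rule compact_SUP_attained[OF compact_Icc _ cont])
  obtain j where j: "\<And>n. j n \<le> 2^n" "(\<lambda>n. dyadic_point a b n (j n)) \<longlonglongrightarrow> t"
    using dyadic_round_down[OF ab t(1)] by blast
  have mem: "dyadic_point a b n (j n) \<in> {a..b}" for n
    using dyadic_point_mem[OF ab j(1)] .
  have lim: "(\<lambda>n. g (dyadic_point a b n (j n))) \<longlonglongrightarrow> g t"
    using j(2) t(1) mem by (intro continuous_on_tendsto_compose[OF cont] always_eventually) auto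
  have lo: "g (dyadic_point a b n (j n)) \<le> dyadic_max g a b n" for n
    unfolding dyadic_max_def using j(1) by (intro Max_ge) auto
  have up: "dyadic_max g a b n \<le> g t" for n
    unfolding t(2) by (rule dyadic_max_le_SUP[OF ab cont])
  show ?thesis
    unfolding t(2)[symmetric]
    by (rule tendsto_sandwich[OF always_eventually always_eventually lim tendsto_const]) (use lo up in auto)
qed

section \<open>Laws of random variables\<close>

lemma prob_space_eqI_atMost:
  fixes P Q :: "'b::ordered_euclidean_space measure"
  assumes "prob_space P" "prob_space Q" and sets: "sets P = sets borel" "sets Q = sets borel"
    and eq: "\<And>a. emeasure P {..a} = emeasure Q {..a}"
  shows "P = Q"
proof -
  let ?E = "insert UNIV (range atMost) :: 'b set set"
  have "sets borel = sigma_sets UNIV (range atMost :: 'b set set)"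
    by (subst borel_eq_atMost) (simp add: sets_measure_of)
  also have "\<dots> = sigma_sets UNIV ?E"
    by (rule sigma_sets_eqI) (auto intro: sigma_sets_top)
  finally have gen: "sets borel = sigma_sets UNIV ?E" .
  have space: "space P = UNIV" "space Q = UNIV"
    using sets_eq_imp_space_eq[OF sets(1)] sets_eq_imp_space_eq[OF sets(2)] by simp_all
  have "{..a} \<inter> {..b} = {..inf a b}" for a b :: 'b
    by auto
  then have "Int_stable ?E"
    unfolding Int_stable_def by auto
  moreover have "emeasure P X = emeasure Q X" if "X \<in> ?E" for X
    using that eq space prob_space.emeasure_space_1[OF assms(1)] prob_space.emeasure_space_1[OF assms(2)]
    by auto
  moreover have "emeasure P UNIV \<noteq> \<infinity>"
    using prob_space.emeasure_space_1[OF assms(1)] space by simp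
  ultimately show ?thesis
    by (intro measure_eqI_generator_eq[where \<Omega>=UNIV and E="?E" and A="\<lambda>_. UNIV"]) (auto simp: sets gen)
qed

lemma (in prob_space) tendsto_prob_atMost_incseq:
  fixes Z :: "nat \<Rightarrow> 'a \<Rightarrow> 'b::ordered_euclidean_space"
  assumes [measurable]: "\<And>n. Z n \<in> borel_measurable M" "Z' \<in> borel_measurable M"
    and inc: "\<And>\<omega>. \<omega> \<in> space M \<Longrightarrow> incseq (\<lambda>n. Z n \<omega>)"
    and lim: "\<And>\<omega>. \<omega> \<in> space M \<Longrightarrow> (\<lambda>n. Z n \<omega>) \<longlonglongrightarrow> Z' \<omega>"
  shows "(\<lambda>n. prob {\<omega>\<in>space M. Z n \<omega> \<le> a}) \<longlonglongrightarrow> prob {\<omega>\<in>space M. Z' \<omega> \<le> a}"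
proof -
  have below_limit: "Z n \<omega> \<le> Z' \<omega>" if "\<omega> \<in> space M" for n \<omega>
  proof -
    have "eventually (\<lambda>m. Z m \<omega> \<in> {Z n \<omega>..}) sequentially"
      using inc[OF that] unfolding eventually_sequentially by (auto simp: incseq_def)
    then show ?thesis
      using Lim_in_closed_set[OF closed_eucl_atLeast _ _ lim[OF that]] by auto
  qed
  have "(\<lambda>n. prob {\<omega>\<in>space M. Z n \<omega> \<le> a}) \<longlonglongrightarrow> prob (\<Inter>n. {\<omega>\<in>space M. Z n \<omega> \<le> a})"
  proof (rule finite_Lim_measure_decseq)
    show "decseq (\<lambda>n. {\<omega>\<in>space M. Z n \<omega> \<le> a})"
      using inc by (auto simp: decseq_def incseq_def intro: order_trans)
  qed auto
  also have "(\<Inter>n. {\<omega>\<in>space M. Z n \<omega> \<le> a}) = {\<omega>\<in>space M. Z' \<omega> \<le> a}"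
  proof (intro set_eqI iffI)
    fix \<omega> assume "\<omega> \<in> (\<Inter>n. {\<omega>\<in>space M. Z n \<omega> \<le> a})"
    then show "\<omega> \<in> {\<omega>\<in>space M. Z' \<omega> \<le> a}"
      using Lim_in_closed_set[OF closed_eucl_atMost _ _ lim, of \<omega> a] by auto
  next
    fix \<omega> assume "\<omega> \<in> {\<omega>\<in>space M. Z' \<omega> \<le> a}"
    then show "\<omega> \<in> (\<Inter>n. {\<omega>\<in>space M. Z n \<omega> \<le> a})"
      using below_limit order_trans by blast
  qed
  finally show ?thesis .
qed

lemma distr_eq_of_incseq_limits:
  fixes Z1 :: "nat \<Rightarrow> 'a \<Rightarrow> 'c::ordered_euclidean_space" and Z2 :: "nat \<Rightarrow> 'b \<Rightarrow> 'c"
  assumes "prob_space M1" "prob_space M2"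
    and [measurable]: "\<And>n. Z1 n \<in> borel_measurable M1" "Z1' \<in> borel_measurable M1"
      "\<And>n. Z2 n \<in> borel_measurable M2" "Z2' \<in> borel_measurable M2"
    and "\<And>\<omega>. \<omega> \<in> space M1 \<Longrightarrow> incseq (\<lambda>n. Z1 n \<omega>)" "\<And>\<omega>. \<omega> \<in> space M1 \<Longrightarrow> (\<lambda>n. Z1 n \<omega>) \<longlonglongrightarrow> Z1' \<omega>"
      "\<And>\<omega>. \<omega> \<in> space M2 \<Longrightarrow> incseq (\<lambda>n. Z2 n \<omega>)" "\<And>\<omega>. \<omega> \<in> space M2 \<Longrightarrow> (\<lambda>n. Z2 n \<omega>) \<longlonglongrightarrow> Z2' \<omega>"
    and eq: "\<And>n. distr M1 borel (Z1 n) = distr M2 borel (Z2 n)"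
  shows "distr M1 borel Z1' = distr M2 borel Z2'"
proof (rule prob_space_eqI_atMost)
  interpret P1: prob_space M1 by fact
  interpret P2: prob_space M2 by fact
  have distr_atMost: "measure (distr M borel Z) {..a} = measure M {\<omega>\<in>space M. Z \<omega> \<le> a}"
    if "Z \<in> borel_measurable M" for M and Z :: "_ \<Rightarrow> 'c" and a
    using that by (subst measure_distr) (auto intro!: arg_cong[where f="measure M"])
  fix a :: 'c
  interpret D1: prob_space "distr M1 borel Z1'" by (rule P1.prob_space_distr) simp
  interpret D2: prob_space "distr M2 borel Z2'" by (rule P2.prob_space_distr) simp
  have "P1.prob {\<omega>\<in>space M1. Z1' \<omega> \<le> a} = P2.prob {\<omega>\<in>space M2. Z2' \<omega> \<le> a}"
    using P1.tendsto_prob_atMost_incseq[of Z1 Z1' a] P2.tendsto_prob_atMost_incseq[of Z2 Z2' a] assms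
    by (intro LIMSEQ_unique) (auto simp flip: distr_atMost simp: eq)
  then have "measure (distr M1 borel Z1') {..a} = measure (distr M2 borel Z2') {..a}"
    by (simp add: distr_atMost)
  then show "emeasure (distr M1 borel Z1') {..a} = emeasure (distr M2 borel Z2') {..a}"
    by (simp add: D1.emeasure_eq_measure D2.emeasure_eq_measure)
qed (simp_all add: prob_space.prob_space_distr assms)

lemma measure_eq_if_distr_eq:
  assumes "distr M1 N X1 = distr M2 N X2" "X1 \<in> measurable M1 N" "X2 \<in> measurable M2 N" "S \<in> sets N"
  shows "measure M1 {\<omega>\<in>space M1. X1 \<omega> \<in> S} = measure M2 {\<omega>\<in>space M2. X2 \<omega> \<in> S}"
proof -
  have "measure M1 {\<omega>\<in>space M1. X1 \<omega> \<in> S} = measure (distr M1 N X1) S"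
    "measure M2 {\<omega>\<in>space M2. X2 \<omega> \<in> S} = measure (distr M2 N X2) S"
    using assms by (subst measure_distr; auto intro!: arg_cong[where f="measure _"])+
  then show ?thesis
    using assms(1) by simp
qed

lemma (in prob_space) prob_less_add_prob_greater:
  fixes X Y :: "'a \<Rightarrow> real"
  assumes [measurable]: "X \<in> borel_measurable M" "Y \<in> borel_measurable M"
  shows "prob {\<omega>\<in>space M. X \<omega> < Y \<omega>} + prob {\<omega>\<in>space M. Y \<omega> < X \<omega>} + prob {\<omega>\<in>space M. X \<omega> = Y \<omega>} = 1"
proof -
  have "space M = {\<omega>\<in>space M. X \<omega> < Y \<omega>} \<union> {\<omega>\<in>space M. Y \<omega> < X \<omega>} \<union> {\<omega>\<in>space M. X \<omega> = Y \<omega>}"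
    by auto
  then have "1 = prob ({\<omega>\<in>space M. X \<omega> < Y \<omega>} \<union> {\<omega>\<in>space M. Y \<omega> < X \<omega>} \<union> {\<omega>\<in>space M. X \<omega> = Y \<omega>})"
    using prob_space by simp
  also have "\<dots> = prob {\<omega>\<in>space M. X \<omega> < Y \<omega>} + prob {\<omega>\<in>space M. Y \<omega> < X \<omega>} + prob {\<omega>\<in>space M. X \<omega> = Y \<omega>}"
    by (subst finite_measure_Union; auto)+
  finally show ?thesis ..
qed

lemma (in prob_space) prob_bounds_if_between_less_le:
  fixes X Y :: "'a \<Rightarrow> real"
  assumes [measurable]: "X \<in> borel_measurable M" "Y \<in> borel_measurable M"
    and S: "S \<in> events" "{\<omega>\<in>space M. X \<omega> < Y \<omega>} \<subseteq> S" "S \<subseteq> {\<omega>\<in>space M. X \<omega> \<le> Y \<omega>}"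
  shows "prob {\<omega>\<in>space M. X \<omega> < Y \<omega>} \<le> prob S" "prob S \<le> 1 - prob {\<omega>\<in>space M. Y \<omega> < X \<omega>}"
proof -
  show "prob {\<omega>\<in>space M. X \<omega> < Y \<omega>} \<le> prob S"
    using S by (intro finite_measure_mono) auto
  have "{\<omega>\<in>space M. X \<omega> \<le> Y \<omega>} = space M - {\<omega>\<in>space M. Y \<omega> < X \<omega>}"
    by auto
  then have "prob {\<omega>\<in>space M. X \<omega> \<le> Y \<omega>} = 1 - prob {\<omega>\<in>space M. Y \<omega> < X \<omega>}"
    by (simp add: prob_compl)
  then show "prob S \<le> 1 - prob {\<omega>\<in>space M. Y \<omega> < X \<omega>}"
    using S finite_measure_mono[of S "{\<omega>\<in>space M. X \<omega> \<le> Y \<omega>}"] by simp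
qed

lemma normal_density_le_peak: "\<sigma> > 0 \<Longrightarrow> normal_density 0 \<sigma> x \<le> 1 / sqrt (2 * pi * \<sigma>\<^sup>2)"
  unfolding normal_density_def by (intro mult_left_le) (auto simp: exp_le_one_iff)

lemma normal_interval_emeasure_le:
  assumes "\<sigma> > 0" "\<epsilon> \<ge> 0"
  shows "emeasure (density lborel (normal_density 0 \<sigma>)) {x - \<epsilon> .. x + \<epsilon>} \<le> ennreal (2 * \<epsilon> / sqrt (2 * pi * \<sigma>\<^sup>2))"
proof -
  let ?C = "1 / sqrt (2 * pi * \<sigma>\<^sup>2)"
  have "emeasure (density lborel (normal_density 0 \<sigma>)) {x - \<epsilon> .. x + \<epsilon>}
      = (\<integral>\<^sup>+y. ennreal (normal_density 0 \<sigma> y) * indicator {x - \<epsilon> .. x + \<epsilon>} y \<partial>lborel)"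
    by (subst emeasure_density) auto
  also have "\<dots> \<le> (\<integral>\<^sup>+y. ennreal ?C * indicator {x - \<epsilon> .. x + \<epsilon>} y \<partial>lborel)"
    using normal_density_le_peak[OF assms(1)] by (intro nn_integral_mono mult_right_mono) (auto intro: ennreal_leI)
  also have "\<dots> = ennreal ?C * emeasure lborel {x - \<epsilon> .. x + \<epsilon>}"
    by (rule nn_integral_cmult_indicator) auto
  also have "\<dots> = ennreal (2 * \<epsilon> / sqrt (2 * pi * \<sigma>\<^sup>2))"
    using assms by (simp add: ennreal_mult[symmetric])
  finally show ?thesis .
qed

lemma (in prob_space) prob_abs_diff_le_normal:
  fixes U Z :: "'a \<Rightarrow> real"
  assumes ind: "indep_var borel U borel Z"
    and Z: "distr M borel Z = density lborel (normal_density 0 \<sigma>)" and "\<sigma> > 0" "\<epsilon> \<ge> 0"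
  shows "prob {\<omega>\<in>space M. \<bar>U \<omega> - Z \<omega>\<bar> \<le> \<epsilon>} \<le> 2 * \<epsilon> / sqrt (2 * pi * \<sigma>\<^sup>2)"
proof -
  let ?S = "{p::real \<times> real. \<bar>fst p - snd p\<bar> \<le> \<epsilon>}"
  have [measurable]: "U \<in> borel_measurable M" "Z \<in> borel_measurable M"
    using indep_var_rv1[OF ind] indep_var_rv2[OF ind] by auto
  have S: "?S \<in> sets (borel \<Otimes>\<^sub>M borel)"
    unfolding borel_prod by (intro borel_closed closed_Collect_le continuous_intros)
  interpret PU: prob_space "distr M borel U" by (rule prob_space_distr) simp
  interpret PZ: prob_space "distr M borel Z" by (rule prob_space_distr) simp
  have "emeasure M {\<omega>\<in>space M. \<bar>U \<omega> - Z \<omega>\<bar> \<le> \<epsilon>} = emeasure (distr M (borel \<Otimes>\<^sub>M borel) (\<lambda>\<omega>. (U \<omega>, Z \<omega>))) ?S"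
    using S by (subst emeasure_distr) (auto intro!: arg_cong[where f="emeasure M"])
  also have "\<dots> = emeasure (distr M borel U \<Otimes>\<^sub>M distr M borel Z) ?S"
    using ind unfolding indep_var_distribution_eq by simp
  also have "\<dots> = (\<integral>\<^sup>+x. emeasure (distr M borel Z) {x - \<epsilon> .. x + \<epsilon>} \<partial>distr M borel U)"
    using S by (subst PZ.emeasure_pair_measure_alt) (auto intro!: nn_integral_cong arg_cong[where f="emeasure _"])
  also have "\<dots> \<le> (\<integral>\<^sup>+x. ennreal (2 * \<epsilon> / sqrt (2 * pi * \<sigma>\<^sup>2)) \<partial>distr M borel U)"
    unfolding Z using assms(3,4) by (intro nn_integral_mono normal_interval_emeasure_le)
  also have "\<dots> = ennreal (2 * \<epsilon> / sqrt (2 * pi * \<sigma>\<^sup>2))"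
    using PU.emeasure_space_1 by simp
  finally show ?thesis
    using assms(4) by (simp add: emeasure_eq_measure ennreal_le_iff)
qed

lemma (in prob_space) prob_eq_0_if_small_balls:
  fixes X :: "nat \<Rightarrow> 'a \<Rightarrow> real"
  assumes [measurable]: "\<And>n. X n \<in> borel_measurable M" "X' \<in> borel_measurable M"
    and lim: "\<And>\<omega>. \<omega> \<in> space M \<Longrightarrow> (\<lambda>n. X n \<omega>) \<longlonglongrightarrow> X' \<omega>"
    and small: "\<And>n \<epsilon>. \<epsilon> > 0 \<Longrightarrow> prob {\<omega>\<in>space M. \<bar>X n \<omega>\<bar> \<le> \<epsilon>} \<le> C * \<epsilon>"
  shows "prob {\<omega>\<in>space M. X' \<omega> = 0} = 0"
proof -
  have bound: "prob {\<omega>\<in>space M. X' \<omega> = 0} \<le> C * \<epsilon>" if "\<epsilon> > 0" for \<epsilon>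
  proof -
    define G where "G N = {\<omega>\<in>space M. \<forall>m\<ge>N. \<bar>X m \<omega>\<bar> \<le> \<epsilon>}" for N
    have [measurable]: "G N \<in> sets M" for N
      unfolding G_def by measurable
    have "(\<lambda>N. prob (G N)) \<longlonglongrightarrow> prob (\<Union>N. G N)"
      by (rule finite_Lim_measure_incseq) (auto simp: G_def incseq_def)
    moreover have "prob (G N) \<le> C * \<epsilon>" for N
      using finite_measure_mono[of "G N" "{\<omega>\<in>space M. \<bar>X N \<omega>\<bar> \<le> \<epsilon>}"] small[OF that, of N]
      by (force simp: G_def)
    ultimately have "prob (\<Union>N. G N) \<le> C * \<epsilon>"
      by (intro LIMSEQ_le_const2) auto
    moreover have "{\<omega>\<in>space M. X' \<omega> = 0} \<subseteq> (\<Union>N. G N)"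
    proof
      fix \<omega> assume \<omega>: "\<omega> \<in> {\<omega>\<in>space M. X' \<omega> = 0}"
      then have "(\<lambda>m. X m \<omega>) \<longlonglongrightarrow> 0"
        using lim[of \<omega>] by simp
      from tendstoD[OF this \<open>\<epsilon> > 0\<close>] have "eventually (\<lambda>m. dist (X m \<omega>) 0 < \<epsilon>) sequentially" .
      then show "\<omega> \<in> (\<Union>N. G N)"
        using \<omega> by (auto simp: G_def eventually_sequentially dist_real_def intro: less_imp_le)
    qed
    moreover have "(\<Union>N. G N) \<in> sets M"
      by measurable
    ultimately show ?thesis
      by (meson finite_measure_mono order_trans)
  qed
  have "prob {\<omega>\<in>space M. X' \<omega> = 0} \<le> 0"
  proof (rule field_le_epsilon)
    fix e :: real assume "0 < e"
    show "prob {\<omega>\<in>space M. X' \<omega> = 0} \<le> 0 + e"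
    proof (cases "C > 0")
      case True
      then show ?thesis using bound[of "e / C"] \<open>0 < e\<close> by simp
    next
      case False
      then show ?thesis using bound[of 1] \<open>0 < e\<close> by simp
    qed
  qed
  then show ?thesis
    using measure_nonneg[of M] by (intro antisym) auto
qed

section \<open>Increments of Brownian motion\<close>

lemma sum_increments_telescope:
  fixes g :: "nat \<Rightarrow> 'a::ab_group_add"
  shows "g j - g k = (\<Sum>i\<in>{k..<j}. g (Suc i) - g i) - (\<Sum>i\<in>{j..<k}. g (Suc i) - g i)"
  by (cases "k \<le> j") (simp_all add: sum_Suc_diff')

lemma brownian_motion_onD:
  assumes "brownian_motion_on M v a b W"
  shows "prob_space M" "\<And>t. t \<in> {a..b} \<Longrightarrow> W t \<in> borel_measurable M"
    "\<And>\<omega>. \<omega> \<in> space M \<Longrightarrow> continuous_on {a..b} (\<lambda>t. W t \<omega>)"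
    "\<And>s t. a \<le> s \<Longrightarrow> s < t \<Longrightarrow> t \<le> b \<Longrightarrow>
        distributed M lborel (\<lambda>\<omega>. W t \<omega> - W s \<omega>) (normal_density 0 (sqrt (v * (t - s))))"
    "\<And>ts. sorted ts \<Longrightarrow> set ts \<subseteq> {a..b} \<Longrightarrow>
        prob_space.indep_vars M (\<lambda>_. borel) (\<lambda>i \<omega>. W (ts ! Suc i) \<omega> - W (ts ! i) \<omega>) {..<length ts - 1}"
  using assms unfolding brownian_motion_on_def by auto

lemma brownian_motion_on_increment_distr:
  assumes "brownian_motion_on M v a b W" "a \<le> s" "s < t" "t \<le> b"
  shows "distr M borel (\<lambda>\<omega>. W t \<omega> - W s \<omega>) = density lborel (normal_density 0 (sqrt (v * (t - s))))"
proof -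
  have "distr M borel (\<lambda>\<omega>. W t \<omega> - W s \<omega>) = distr M lborel (\<lambda>\<omega>. W t \<omega> - W s \<omega>)"
    by (rule distr_cong) auto
  then show ?thesis
    using brownian_motion_onD(4)[OF assms] unfolding distributed_def by auto
qed

lemma brownian_motion_on_increments_indep:
  assumes bm: "brownian_motion_on M v a b W"
    and h: "\<And>i. i \<le> L \<Longrightarrow> h i \<in> {a..b}" "\<And>i. i < L \<Longrightarrow> h i < h (Suc i)"
  shows "prob_space.indep_vars M (\<lambda>_. borel) (\<lambda>i \<omega>. W (h (Suc i)) \<omega> - W (h i) \<omega>) {..<L}"
proof -
  interpret prob_space M by (rule brownian_motion_onD(1)[OF bm])
  define ts where "ts = map h [0..<Suc L]"
  have nth: "i \<le> L \<Longrightarrow> ts ! i = h i" for i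
    by (simp add: ts_def nth_append del: upt_Suc)
  have len: "length ts = Suc L"
    by (simp add: ts_def)
  have "sorted ts"
    unfolding sorted_iff_nth_Suc len using h(2) nth by (simp add: less_imp_le)
  moreover have "set ts \<subseteq> {a..b}"
    using h(1) by (auto simp: ts_def)
  ultimately have "indep_vars (\<lambda>_. borel) (\<lambda>i \<omega>. W (ts ! Suc i) \<omega> - W (ts ! i) \<omega>) {..<L}"
    using brownian_motion_onD(5)[OF bm] len by fastforce
  moreover have "indep_vars (\<lambda>_. borel) (\<lambda>i \<omega>. W (ts ! Suc i) \<omega> - W (ts ! i) \<omega>) {..<L}
      = indep_vars (\<lambda>_. borel) (\<lambda>i \<omega>. W (h (Suc i)) \<omega> - W (h i) \<omega>) {..<L}"
    by (intro indep_vars_cong) (auto simp: nth Suc_le_eq)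
  ultimately show ?thesis by simp
qed

lemma brownian_motion_on_increments_distr:
  assumes bm: "brownian_motion_on M v a b W"
    and h: "\<And>i. i \<le> L \<Longrightarrow> h i \<in> {a..b}" "\<And>i. i < L \<Longrightarrow> h i < h (Suc i)" and "0 < L"
  shows "distr M (PiM {..<L} (\<lambda>_. borel)) (\<lambda>\<omega>. \<lambda>i\<in>{..<L}. W (h (Suc i)) \<omega> - W (h i) \<omega>)
       = PiM {..<L} (\<lambda>i. density lborel (normal_density 0 (sqrt (v * (h (Suc i) - h i)))))"
proof -
  interpret prob_space M using brownian_motion_onD(1)[OF bm] .
  have rv: "random_variable borel (\<lambda>\<omega>. W (h (Suc i)) \<omega> - W (h i) \<omega>)" if "i \<in> {..<L}" for i
    using that h(1) brownian_motion_onD(2)[OF bm] by (intro borel_measurable_diff) auto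
  have ne: "{..<L} \<noteq> {}" using \<open>0 < L\<close> by auto
  have "distr M (PiM {..<L} (\<lambda>_. borel)) (\<lambda>\<omega>. \<lambda>i\<in>{..<L}. W (h (Suc i)) \<omega> - W (h i) \<omega>)
     = PiM {..<L} (\<lambda>i. distr M borel (\<lambda>\<omega>. W (h (Suc i)) \<omega> - W (h i) \<omega>))"
    using indep_vars_iff_distr_eq_PiM'[OF ne rv] brownian_motion_on_increments_indep[of M v a b W L h, OF bm h] by simp
  also have "\<dots> = PiM {..<L} (\<lambda>i. density lborel (normal_density 0 (sqrt (v * (h (Suc i) - h i)))))"
    using h by (intro PiM_cong refl brownian_motion_on_increment_distr[OF bm]) auto
  finally show ?thesis .
qed

lemma brownian_motion_on_relative_values_distr_eq:
  assumes bm1: "brownian_motion_on M1 v a b W1" and bm2: "brownian_motion_on M2 v a b W2"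
    and h: "\<And>i. i \<le> L \<Longrightarrow> h i \<in> {a..b}" "\<And>i. i < L \<Longrightarrow> h i < h (Suc i)"
    and "0 < L" "k \<le> L"
  shows "distr M1 (PiM {..L} (\<lambda>_. borel)) (\<lambda>\<omega>. \<lambda>j\<in>{..L}. W1 (h j) \<omega> - W1 (h k) \<omega>)
       = distr M2 (PiM {..L} (\<lambda>_. borel)) (\<lambda>\<omega>. \<lambda>j\<in>{..L}. W2 (h j) \<omega> - W2 (h k) \<omega>)"
proof -
  define R :: "(nat \<Rightarrow> real) \<Rightarrow> nat \<Rightarrow> real" where
    "R x = (\<lambda>j\<in>{..L}. (\<Sum>i\<in>{k..<j}. x i) - (\<Sum>i\<in>{j..<k}. x i))" for x
  have R: "R \<in> measurable (PiM {..<L} (\<lambda>_. borel)) (PiM {..L} (\<lambda>_. borel))"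
    unfolding R_def using \<open>k \<le> L\<close>
    by (intro measurable_restrict borel_measurable_diff borel_measurable_sum measurable_component_singleton) auto
  have relative_distr: "distr M (PiM {..L} (\<lambda>_. borel)) (\<lambda>\<omega>. \<lambda>j\<in>{..L}. W (h j) \<omega> - W (h k) \<omega>)
      = distr (PiM {..<L} (\<lambda>i. density lborel (normal_density 0 (sqrt (v * (h (Suc i) - h i)))))) (PiM {..L} (\<lambda>_. borel)) R"
    if bm: "brownian_motion_on M v a b W" for M and W :: "real \<Rightarrow> 'c \<Rightarrow> real"
  proof -
    let ?X = "\<lambda>\<omega>. \<lambda>i\<in>{..<L}. W (h (Suc i)) \<omega> - W (h i) \<omega>"
    have X: "?X \<in> measurable M (PiM {..<L} (\<lambda>_. borel))"
      using brownian_motion_onD(2)[OF bm] h(1) by (intro measurable_restrict borel_measurable_diff) auto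
    have "R (?X \<omega>) = (\<lambda>j\<in>{..L}. W (h j) \<omega> - W (h k) \<omega>)" for \<omega>
    proof
      fix j
      have "(\<Sum>i\<in>{k..<j}. ?X \<omega> i) = (\<Sum>i\<in>{k..<j}. W (h (Suc i)) \<omega> - W (h i) \<omega>)"
        "(\<Sum>i\<in>{j..<k}. ?X \<omega> i) = (\<Sum>i\<in>{j..<k}. W (h (Suc i)) \<omega> - W (h i) \<omega>)" if "j \<le> L"
        using that \<open>k \<le> L\<close> by (auto intro: sum.cong)
      then show "R (?X \<omega>) j = (\<lambda>j\<in>{..L}. W (h j) \<omega> - W (h k) \<omega>) j"
        unfolding R_def by (simp add: sum_increments_telescope[of "\<lambda>i. W (h i) \<omega>" j k])
    qed
    then have "distr M (PiM {..L} (\<lambda>_. borel)) (\<lambda>\<omega>. \<lambda>j\<in>{..L}. W (h j) \<omega> - W (h k) \<omega>)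
        = distr (distr M (PiM {..<L} (\<lambda>_. borel)) ?X) (PiM {..L} (\<lambda>_. borel)) R"
      by (simp add: distr_distr[OF R X] comp_def)
    then show ?thesis
      by (simp add: brownian_motion_on_increments_distr[of M v a b W L h, OF bm h \<open>0 < L\<close>])
  qed
  show ?thesis
    unfolding relative_distr[OF bm1] relative_distr[OF bm2] ..
qed

section \<open>The gap path\<close>

definition gap_path :: "(real \<Rightarrow> real) \<Rightarrow> (real \<Rightarrow> 'a \<Rightarrow> real) \<Rightarrow> 'a \<Rightarrow> real \<Rightarrow> real" where
  "gap_path f W \<omega> t = f t - (W t \<omega> - W 0 \<omega>)"

definition gap_sup :: "(real \<Rightarrow> real) \<Rightarrow> (real \<Rightarrow> 'a \<Rightarrow> real) \<Rightarrow> real \<Rightarrow> real \<Rightarrow> 'a \<Rightarrow> real" where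
  "gap_sup f W a b \<omega> = (SUP t\<in>{a..b}. gap_path f W \<omega> t)"

lemma reflMinus0_eq_gap_sup: "reflMinus0 f W \<omega> = gap_sup f W (-1) 0 \<omega>"
  unfolding reflMinus0_def gap_sup_def gap_path_def by (simp add: algebra_simps)

lemma reflPlus0_eq_gap_sup: "reflPlus0 f W \<omega> = gap_sup f W 0 1 \<omega>"
  unfolding reflPlus0_def gap_sup_def gap_path_def by (simp add: algebra_simps)

lemma gap_path_0 [simp]: "gap_path f W \<omega> 0 = f 0"
  by (simp add: gap_path_def)

lemma sigmaMinus_less_1_iff:
  "sigmaMinus f W \<omega> < 1 \<longleftrightarrow> (\<exists>t. 0 \<le> t \<and> t < 1 \<and> gap_path f W \<omega> t = gap_sup f W (-1) 0 \<omega>)"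
  unfolding sigmaMinus_def INF_less_iff reflMinus0_eq_gap_sup gap_path_def by auto

lemma sigmaPlus_greater_iff:
  "sigmaPlus f W \<omega> > -1 \<longleftrightarrow> (\<exists>t. -1 < t \<and> t \<le> 0 \<and> gap_path f W \<omega> t = gap_sup f W 0 1 \<omega>)"
proof -
  have "- (1::ereal) = ereal (-1)"
    by (simp add: one_ereal_def)
  moreover have "reflPlus0 f W \<omega> + W t \<omega> - W 0 \<omega> = f t \<longleftrightarrow> gap_path f W \<omega> t = gap_sup f W 0 1 \<omega>" for t
    unfolding reflPlus0_eq_gap_sup gap_path_def by linarith
  ultimately show ?thesis
    unfolding sigmaPlus_def less_SUP_iff by (auto intro: less_imp_le)
qed

lemma dyadic_max_gap_shift:
  "dyadic_max (gap_path f W \<omega>) d b n = dyadic_max (\<lambda>t. f t - (W t \<omega> - W d \<omega>)) d b n - (W d \<omega> - W 0 \<omega>)"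
proof -
  have "dyadic_max (gap_path f W \<omega>) d b n
      = Max ((\<lambda>j. (f (dyadic_point d b n j) - (W (dyadic_point d b n j) \<omega> - W d \<omega>)) + - (W d \<omega> - W 0 \<omega>)) ` {..2^n})"
    unfolding dyadic_max_def gap_path_def by (simp add: algebra_simps)
  also have "\<dots> = dyadic_max (\<lambda>t. f t - (W t \<omega> - W d \<omega>)) d b n + - (W d \<omega> - W 0 \<omega>)"
    unfolding dyadic_max_def by (rule Max_add_commute) auto
  finally show ?thesis by simp
qed

lemma gap_dyadic_maxima_distr_eq:
  assumes bm1: "brownian_motion_on M1 v (-1) 1 W1" and bm2: "brownian_motion_on M2 v (-1) 1 W2"
  shows "distr M1 borel (\<lambda>\<omega>. (dyadic_max (gap_path f W1 \<omega>) (-1) 0 n, dyadic_max (gap_path f W1 \<omega>) 0 1 n))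
       = distr M2 borel (\<lambda>\<omega>. (dyadic_max (gap_path f W2 \<omega>) (-1) 0 n, dyadic_max (gap_path f W2 \<omega>) 0 1 n))"
proof -
  define h where "h = dyadic_point (-1) 1 (Suc n)"
  define L :: nat where "L = 2^Suc n"
  have h_left: "h j = dyadic_point (-1) 0 n j" and h_right: "h (2^n + j) = dyadic_point 0 1 n j" for j
    using dyadic_point_halves[of "-1" 0 n] by (simp_all add: h_def)
  have h0: "h (2^n) = 0"
    by (simp add: h_left)
  have h: "\<And>i. i \<le> L \<Longrightarrow> h i \<in> {-1..1}" "\<And>i. i < L \<Longrightarrow> h i < h (Suc i)"
    using dyadic_point_mem[of "-1" 1 _ "Suc n"] by (simp_all add: h_def L_def dyadic_point_strict_mono)
  define \<Psi> :: "(nat \<Rightarrow> real) \<Rightarrow> real \<times> real" where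
    "\<Psi> y = (Max ((\<lambda>j. f (h j) - y j) ` {..2^n}), Max ((\<lambda>j. f (h (2^n + j)) - y (2^n + j)) ` {..2^n}))" for y
  have \<Psi>: "\<Psi> \<in> borel_measurable (PiM {..L} (\<lambda>_. borel))"
    unfolding \<Psi>_def L_def
    by (intro borel_measurable_Pair borel_measurable_Max borel_measurable_diff borel_measurable_const
        measurable_component_singleton) auto
  have maxima_eq: "(dyadic_max (gap_path f W \<omega>) (-1) 0 n, dyadic_max (gap_path f W \<omega>) 0 1 n)
      = \<Psi> (\<lambda>j\<in>{..L}. W (h j) \<omega> - W (h (2^n)) \<omega>)" for W :: "real \<Rightarrow> 'c \<Rightarrow> real" and \<omega>
  proof -
    have "j \<le> L" "2^n + j \<le> L" if "j \<le> 2^n" for j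
      using that by (simp_all add: L_def)
    then show ?thesis
      unfolding \<Psi>_def dyadic_max_def gap_path_def h0
      by (auto simp flip: h_left h_right intro!: arg_cong[where f=Max] image_cong)
  qed
  have rel: "(\<lambda>\<omega>. \<lambda>j\<in>{..L}. W (h j) \<omega> - W (h (2^n)) \<omega>) \<in> measurable M (PiM {..L} (\<lambda>_. borel))"
    if "brownian_motion_on M v (-1) 1 W" for M and W :: "real \<Rightarrow> 'c \<Rightarrow> real"
    using brownian_motion_onD(2)[OF that] h(1) h0 by (intro measurable_restrict borel_measurable_diff) auto
  have "distr M1 (PiM {..L} (\<lambda>_. borel)) (\<lambda>\<omega>. \<lambda>j\<in>{..L}. W1 (h j) \<omega> - W1 (h (2^n)) \<omega>)
      = distr M2 (PiM {..L} (\<lambda>_. borel)) (\<lambda>\<omega>. \<lambda>j\<in>{..L}. W2 (h j) \<omega> - W2 (h (2^n)) \<omega>)"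
    by (rule brownian_motion_on_relative_values_distr_eq[where h=h and L=L, OF bm1 bm2 h]) (simp_all add: L_def)
  then have "distr (distr M1 (PiM {..L} (\<lambda>_. borel)) (\<lambda>\<omega>. \<lambda>j\<in>{..L}. W1 (h j) \<omega> - W1 (h (2^n)) \<omega>)) borel \<Psi>
      = distr (distr M2 (PiM {..L} (\<lambda>_. borel)) (\<lambda>\<omega>. \<lambda>j\<in>{..L}. W2 (h j) \<omega> - W2 (h (2^n)) \<omega>)) borel \<Psi>"
    by simp
  then show ?thesis
    unfolding maxima_eq distr_distr[OF \<Psi> rel[OF bm1]] distr_distr[OF \<Psi> rel[OF bm2]] comp_def .
qed

definition split_grid :: "real \<Rightarrow> nat \<Rightarrow> nat \<Rightarrow> real" where
  "split_grid d n j = (if j \<le> 2^n then dyadic_point (-1) 0 n j else dyadic_point d 1 n (j - Suc (2^n)))"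

lemma split_grid_left: "j \<le> 2^n \<Longrightarrow> split_grid d n j = dyadic_point (-1) 0 n j"
  and split_grid_right: "split_grid d n (Suc (2^n) + k) = dyadic_point d 1 n k"
  by (simp_all add: split_grid_def)

lemma split_grid_mem:
  assumes "0 < d" "d < 1" "j \<le> Suc (2^n + 2^n)"
  shows "split_grid d n j \<in> {-1..1}"
proof (cases "j \<le> 2^n")
  case True
  then show ?thesis using dyadic_point_mem[of "-1" 0 j n] by (auto simp: split_grid_def)
next
  case False
  then have "j - Suc (2^n) \<le> 2^n" using assms(3) by simp
  then show ?thesis using assms False dyadic_point_mem[of d 1 "j - Suc (2^n)" n] by (auto simp: split_grid_def)
qed

lemma split_grid_strict_mono:
  assumes "0 < d" "d < 1"
  shows "split_grid d n j < split_grid d n (Suc j)"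
proof -
  consider "Suc j \<le> 2^n" | "j = 2^n" | "2^n < j" by linarith
  then show ?thesis
  proof cases
    case 3
    then have "Suc j - Suc (2^n) = Suc (j - Suc (2^n))" by simp
    then show ?thesis using 3 assms by (simp add: split_grid_def dyadic_point_strict_mono)
  qed (use assms in \<open>simp_all add: split_grid_def dyadic_point_strict_mono\<close>)
qed

definition split_max_diff :: "(real \<Rightarrow> real) \<Rightarrow> real \<Rightarrow> nat \<Rightarrow> (nat \<Rightarrow> real) \<Rightarrow> real" where
  "split_max_diff f d n x =
     Max ((\<lambda>k. f (dyadic_point d 1 n k) - (\<Sum>i\<in>{Suc (2^n)..<Suc (2^n) + k}. x i)) ` {..2^n})
   - Max ((\<lambda>j. f (dyadic_point (-1) 0 n j) + (\<Sum>i\<in>{j..<2^n}. x i)) ` {..2^n})"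

lemma split_max_diff_measurable:
  "split_max_diff f d n \<in> borel_measurable (PiM ({..<Suc (2^n + 2^n)} - {2^n}) (\<lambda>_. borel))"
  unfolding split_max_diff_def
  by (intro borel_measurable_diff borel_measurable_Max borel_measurable_add borel_measurable_const
      borel_measurable_sum finite_atMost measurable_component_singleton) auto

text \<open>The increment with index 2^n, which is W d - W 0, does not enter.\<close>
lemma split_max_diff_increments:
  fixes W :: "real \<Rightarrow> 'a \<Rightarrow> real" and \<omega> :: 'a and d :: real and n :: nat
  defines "X \<equiv> \<lambda>i. W (split_grid d n (Suc i)) \<omega> - W (split_grid d n i) \<omega>"
  shows "split_max_diff f d n (restrict X ({..<Suc (2^n + 2^n)} - {2^n}))
       = dyadic_max (\<lambda>t. f t - (W t \<omega> - W d \<omega>)) d 1 n - dyadic_max (gap_path f W \<omega>) (-1) 0 n"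
proof -
  let ?B = "{..<Suc (2^n + 2^n)} - {2^n}"
  have ends: "split_grid d n (Suc (2^n)) = d" "split_grid d n (2^n) = 0"
    using split_grid_right[of d n 0] split_grid_left[of "2^n" n d] by simp_all
  have right: "(\<Sum>i\<in>{Suc (2^n)..<Suc (2^n) + k}. restrict X ?B i) = W (dyadic_point d 1 n k) \<omega> - W d \<omega>"
    if "k \<le> 2^n" for k
  proof -
    have "(\<Sum>i\<in>{Suc (2^n)..<Suc (2^n) + k}. restrict X ?B i) = (\<Sum>i\<in>{Suc (2^n)..<Suc (2^n) + k}. X i)"
      using that by (intro sum.cong) auto
    also have "\<dots> = W (split_grid d n (Suc (2^n) + k)) \<omega> - W (split_grid d n (Suc (2^n))) \<omega>"
      unfolding X_def by (rule sum_Suc_diff') simp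
    finally show ?thesis
      by (simp only: split_grid_right ends)
  qed
  have left: "(\<Sum>i\<in>{j..<2^n}. restrict X ?B i) = W 0 \<omega> - W (dyadic_point (-1) 0 n j) \<omega>"
    if "j \<le> 2^n" for j
  proof -
    have "(\<Sum>i\<in>{j..<2^n}. restrict X ?B i) = (\<Sum>i\<in>{j..<2^n}. X i)"
      by (intro sum.cong) auto
    also have "\<dots> = W (split_grid d n (2^n)) \<omega> - W (split_grid d n j) \<omega>"
      unfolding X_def by (rule sum_Suc_diff') (use that in simp)
    finally show ?thesis
      using that by (simp only: split_grid_left ends)
  qed
  show ?thesis
    unfolding split_max_diff_def dyadic_max_def gap_path_def
    by (intro arg_cong2[where f="(-)"] arg_cong[where f=Max] image_cong refl)
      (simp_all only: atMost_iff left right diff_diff_eq2 diff_add_eq add_diff_eq)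
qed

lemma gap_dyadic_split_indep:
  assumes bm: "brownian_motion_on M v (-1) 1 W" and d: "0 < d" "d < 1"
  shows "prob_space.indep_var M borel
     (\<lambda>\<omega>. dyadic_max (\<lambda>t. f t - (W t \<omega> - W d \<omega>)) d 1 n - dyadic_max (gap_path f W \<omega>) (-1) 0 n)
     borel (\<lambda>\<omega>. W d \<omega> - W 0 \<omega>)"
proof -
  interpret prob_space M using brownian_motion_onD(1)[OF bm] .
  let ?X = "\<lambda>i \<omega>. W (split_grid d n (Suc i)) \<omega> - W (split_grid d n i) \<omega>"
  let ?L = "Suc (2^n + 2^n)"
  have "indep_vars (\<lambda>_. borel) ?X {..<?L}"
    using split_grid_mem[OF d] split_grid_strict_mono[OF d]
    by (intro brownian_motion_on_increments_indep[OF bm]) auto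
  then have ind: "indep_var (PiM ({..<?L} - {2^n}) (\<lambda>_. borel)) (\<lambda>\<omega>. restrict (\<lambda>i. ?X i \<omega>) ({..<?L} - {2^n}))
                        (PiM {2^n} (\<lambda>_. borel)) (\<lambda>\<omega>. restrict (\<lambda>i. ?X i \<omega>) {2^n})"
    by (rule indep_var_restrict) auto
  have "restrict (\<lambda>i. ?X i \<omega>) {2^n} (2^n) = W d \<omega> - W 0 \<omega>" for \<omega>
    using split_grid_right[of d n 0] split_grid_left[of "2^n" n d] by simp
  moreover have "(\<lambda>x. x (2^n)) \<in> borel_measurable (PiM {2^n} (\<lambda>_. borel))"
    by (rule measurable_component_singleton) simp
  ultimately show ?thesis
    using indep_var_compose[OF ind split_max_diff_measurable[of f d n], of "\<lambda>x. x (2^n)" borel]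
    by (simp add: comp_def split_max_diff_increments)
qed

context
  fixes M :: "'a measure" and v :: real and f :: "real \<Rightarrow> real" and W :: "real \<Rightarrow> 'a \<Rightarrow> real"
  assumes f: "continuous_on {-1..1} f" and bm: "brownian_motion_on M v (-1) 1 W"
begin

interpretation prob_space M
  by (rule brownian_motion_onD(1)[OF bm])

lemma gap_path_continuous:
  assumes "\<omega> \<in> space M" "-1 \<le> a" "b \<le> 1"
  shows "continuous_on {a..b} (gap_path f W \<omega>)"
proof -
  have "{a..b} \<subseteq> {-1..1}" using assms by auto
  then show ?thesis unfolding gap_path_def
    by (intro continuous_on_diff continuous_on_const continuous_on_subset[OF f]
        continuous_on_subset[OF brownian_motion_onD(3)[OF bm assms(1)]])
qed

lemma dyadic_max_gap_measurable:
  assumes "-1 \<le> a" "a \<le> b" "b \<le> 1"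
  shows "(\<lambda>\<omega>. dyadic_max (gap_path f W \<omega>) a b n) \<in> borel_measurable M"
  unfolding dyadic_max_def gap_path_def
proof (rule borel_measurable_Max, simp)
  fix j :: nat assume "j \<in> {..2^n}"
  then have "dyadic_point a b n j \<in> {-1..1}"
    using dyadic_point_mem[OF assms(2), of j n] assms by auto
  then show "(\<lambda>\<omega>. f (dyadic_point a b n j) - (W (dyadic_point a b n j) \<omega> - W 0 \<omega>)) \<in> borel_measurable M"
    using brownian_motion_onD(2)[OF bm] by (intro borel_measurable_diff borel_measurable_const) auto
qed

lemma dyadic_max_gap_tendsto:
  assumes "\<omega> \<in> space M" "-1 \<le> a" "a \<le> b" "b \<le> 1"
  shows "(\<lambda>n. dyadic_max (gap_path f W \<omega>) a b n) \<longlonglongrightarrow> gap_sup f W a b \<omega>"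
  unfolding gap_sup_def using assms by (intro dyadic_max_tendsto_SUP gap_path_continuous) auto

lemma gap_sup_measurable:
  assumes "-1 \<le> a" "a \<le> b" "b \<le> 1"
  shows "gap_sup f W a b \<in> borel_measurable M"
  using assms by (intro borel_measurable_LIMSEQ_metric[OF dyadic_max_gap_measurable dyadic_max_gap_tendsto])

lemma gap_path_le_gap_sup:
  assumes "\<omega> \<in> space M" "-1 \<le> a" "b \<le> 1" "t \<in> {a..b}"
  shows "gap_path f W \<omega> t \<le> gap_sup f W a b \<omega>"
  unfolding gap_sup_def using assms by (intro compact_le_SUP gap_path_continuous) auto

lemma sigmaMinus_event_bounds:
  shows "{\<omega>\<in>space M. sigmaMinus f W \<omega> < 1} \<in> sets M"
    and "{\<omega>\<in>space M. gap_sup f W (-1) 0 \<omega> < gap_sup f W 0 1 \<omega>} \<subseteq> {\<omega>\<in>space M. sigmaMinus f W \<omega> < 1}"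
    and "{\<omega>\<in>space M. sigmaMinus f W \<omega> < 1} \<subseteq> {\<omega>\<in>space M. gap_sup f W (-1) 0 \<omega> \<le> gap_sup f W 0 1 \<omega>}"
proof -
  let ?A = "gap_sup f W (-1) 0"
  have cont: "continuous_on {0..1} (gap_path f W \<omega>)" if "\<omega> \<in> space M" for \<omega>
    using gap_path_continuous[OF that] by simp
  have start: "gap_path f W \<omega> 0 \<le> ?A \<omega>" if "\<omega> \<in> space M" for \<omega>
    using gap_path_le_gap_sup[OF that, of "-1" 0 0] by simp
  have [measurable]: "?A \<in> borel_measurable M" "gap_sup f W 0 (1 - 1 / (real k + 2)) \<in> borel_measurable M" for k
    by (intro gap_sup_measurable; simp add: field_simps)+
  have event_eq: "{\<omega>\<in>space M. sigmaMinus f W \<omega> < 1}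
      = {\<omega>\<in>space M. \<exists>k::nat. ?A \<omega> \<le> gap_sup f W 0 (1 - 1 / (real k + 2)) \<omega>}"
  proof (rule Collect_cong, rule conj_cong[OF refl])
    fix \<omega> assume "\<omega> \<in> space M"
    then show "sigmaMinus f W \<omega> < 1 \<longleftrightarrow> (\<exists>k::nat. ?A \<omega> \<le> gap_sup f W 0 (1 - 1 / (real k + 2)) \<omega>)"
      using hits_level_before_iff[of 0 1 "gap_path f W \<omega>" "?A \<omega>"] cont start
      by (simp add: sigmaMinus_less_1_iff gap_sup_def)
  qed
  show "{\<omega>\<in>space M. sigmaMinus f W \<omega> < 1} \<in> sets M"
    unfolding event_eq by measurable
  show "{\<omega>\<in>space M. ?A \<omega> < gap_sup f W 0 1 \<omega>} \<subseteq> {\<omega>\<in>space M. sigmaMinus f W \<omega> < 1}"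
    using hits_level_before_end[of 0 1 "gap_path f W _" "?A _"] cont start
    by (auto simp: sigmaMinus_less_1_iff gap_sup_def)
  show "{\<omega>\<in>space M. sigmaMinus f W \<omega> < 1} \<subseteq> {\<omega>\<in>space M. ?A \<omega> \<le> gap_sup f W 0 1 \<omega>}"
  proof safe
    fix \<omega> assume \<omega>: "\<omega> \<in> space M" "sigmaMinus f W \<omega> < 1"
    then obtain t where "0 \<le> t" "t < 1" "gap_path f W \<omega> t = ?A \<omega>"
      by (auto simp: sigmaMinus_less_1_iff)
    then show "?A \<omega> \<le> gap_sup f W 0 1 \<omega>"
      using gap_path_le_gap_sup[of \<omega> 0 1 t] \<omega> by auto
  qed
qed

lemma sigmaPlus_event_bounds:
  shows "{\<omega>\<in>space M. sigmaPlus f W \<omega> > -1} \<in> sets M"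
    and "{\<omega>\<in>space M. gap_sup f W 0 1 \<omega> < gap_sup f W (-1) 0 \<omega>} \<subseteq> {\<omega>\<in>space M. sigmaPlus f W \<omega> > -1}"
    and "{\<omega>\<in>space M. sigmaPlus f W \<omega> > -1} \<subseteq> {\<omega>\<in>space M. gap_sup f W 0 1 \<omega> \<le> gap_sup f W (-1) 0 \<omega>}"
proof -
  let ?B = "gap_sup f W 0 1"
  have cont: "continuous_on {-1..0} (gap_path f W \<omega>)" if "\<omega> \<in> space M" for \<omega>
    using gap_path_continuous[OF that] by simp
  have start: "gap_path f W \<omega> 0 \<le> ?B \<omega>" if "\<omega> \<in> space M" for \<omega>
    using gap_path_le_gap_sup[OF that, of 0 1 0] by simp
  have [measurable]: "?B \<in> borel_measurable M" "gap_sup f W (-1 + 1 / (real k + 2)) 0 \<in> borel_measurable M" for k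
    by (intro gap_sup_measurable; simp add: field_simps)+
  have event_eq: "{\<omega>\<in>space M. sigmaPlus f W \<omega> > -1}
      = {\<omega>\<in>space M. \<exists>k::nat. ?B \<omega> \<le> gap_sup f W (-1 + 1 / (real k + 2)) 0 \<omega>}"
  proof (rule Collect_cong, rule conj_cong[OF refl])
    fix \<omega> assume "\<omega> \<in> space M"
    then show "sigmaPlus f W \<omega> > -1 \<longleftrightarrow> (\<exists>k::nat. ?B \<omega> \<le> gap_sup f W (-1 + 1 / (real k + 2)) 0 \<omega>)"
      using hits_level_after_iff[of "-1" 0 "gap_path f W \<omega>" "?B \<omega>"] cont start
      by (simp add: sigmaPlus_greater_iff gap_sup_def)
  qed
  show "{\<omega>\<in>space M. sigmaPlus f W \<omega> > -1} \<in> sets M"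
    unfolding event_eq by measurable
  show "{\<omega>\<in>space M. ?B \<omega> < gap_sup f W (-1) 0 \<omega>} \<subseteq> {\<omega>\<in>space M. sigmaPlus f W \<omega> > -1}"
    using hits_level_after_start[of "-1" 0 "gap_path f W _" "?B _"] cont start
    by (auto simp: sigmaPlus_greater_iff gap_sup_def)
  show "{\<omega>\<in>space M. sigmaPlus f W \<omega> > -1} \<subseteq> {\<omega>\<in>space M. ?B \<omega> \<le> gap_sup f W (-1) 0 \<omega>}"
  proof safe
    fix \<omega> assume \<omega>: "\<omega> \<in> space M" "sigmaPlus f W \<omega> > -1"
    then obtain t where "-1 < t" "t \<le> 0" "gap_path f W \<omega> t = ?B \<omega>"
      by (auto simp: sigmaPlus_greater_iff)
    then show "?B \<omega> \<le> gap_sup f W (-1) 0 \<omega>"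
      using gap_path_le_gap_sup[of \<omega> "-1" 0 t] \<omega> by auto
  qed
qed

lemma gap_sup_tie_after_null:
  assumes v: "v > 0" and d: "0 < d" "d < 1"
  shows "prob {\<omega>\<in>space M. gap_sup f W d 1 \<omega> - gap_sup f W (-1) 0 \<omega> = 0} = 0"
proof -
  define \<sigma> where "\<sigma> = sqrt (v * (d - 0))"
  have \<sigma>: "\<sigma> > 0"
    using v d by (simp add: \<sigma>_def)
  have Z: "distr M borel (\<lambda>\<omega>. W d \<omega> - W 0 \<omega>) = density lborel (normal_density 0 \<sigma>)"
    unfolding \<sigma>_def using d by (intro brownian_motion_on_increment_distr[OF bm]) auto
  define X where "X n \<omega> = dyadic_max (gap_path f W \<omega>) d 1 n - dyadic_max (gap_path f W \<omega>) (-1) 0 n" for n \<omega>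
  show ?thesis
  proof (rule prob_eq_0_if_small_balls[of X])
    show "X n \<in> borel_measurable M" for n
      unfolding X_def using d by (intro borel_measurable_diff dyadic_max_gap_measurable) auto
    show "(\<lambda>\<omega>. gap_sup f W d 1 \<omega> - gap_sup f W (-1) 0 \<omega>) \<in> borel_measurable M"
      using d by (intro borel_measurable_diff gap_sup_measurable) auto
    show "(\<lambda>n. X n \<omega>) \<longlonglongrightarrow> gap_sup f W d 1 \<omega> - gap_sup f W (-1) 0 \<omega>" if "\<omega> \<in> space M" for \<omega>
      unfolding X_def using d that by (intro tendsto_diff dyadic_max_gap_tendsto) auto
    show "prob {\<omega>\<in>space M. \<bar>X n \<omega>\<bar> \<le> \<epsilon>} \<le> 2 / sqrt (2 * pi * \<sigma>\<^sup>2) * \<epsilon>" if "\<epsilon> > 0" for n \<epsilon>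
      using prob_abs_diff_le_normal[OF gap_dyadic_split_indep[OF bm d, of f n] Z \<sigma>, of \<epsilon>] that
      by (simp add: X_def dyadic_max_gap_shift[of f W _ d] algebra_simps)
  qed
qed

lemma gap_sups_tie_le:
  assumes v: "v > 0" and d: "0 < d" "d < 1"
  shows "prob {\<omega>\<in>space M. gap_sup f W (-1) 0 \<omega> = gap_sup f W 0 1 \<omega>}
       \<le> prob {\<omega>\<in>space M. gap_sup f W (-1) 0 \<omega> - gap_sup f W 0 d \<omega> \<le> 0}"
proof -
  let ?A = "gap_sup f W (-1) 0"
  have [measurable]: "?A \<in> borel_measurable M" "gap_sup f W 0 d \<in> borel_measurable M"
    "gap_sup f W d 1 \<in> borel_measurable M"
    using d by (auto intro!: gap_sup_measurable)
  have "gap_sup f W 0 1 \<omega> = max (gap_sup f W 0 d \<omega>) (gap_sup f W d 1 \<omega>)" if "\<omega> \<in> space M" for \<omega>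
    unfolding gap_sup_def using d gap_path_continuous[OF that, of 0 1] by (intro Icc_SUP_split) auto
  then have "{\<omega>\<in>space M. ?A \<omega> = gap_sup f W 0 1 \<omega>}
      \<subseteq> {\<omega>\<in>space M. ?A \<omega> - gap_sup f W 0 d \<omega> \<le> 0} \<union> {\<omega>\<in>space M. gap_sup f W d 1 \<omega> - ?A \<omega> = 0}"
    by (auto simp: max_def split: if_splits)
  then have "prob {\<omega>\<in>space M. ?A \<omega> = gap_sup f W 0 1 \<omega>}
      \<le> prob ({\<omega>\<in>space M. ?A \<omega> - gap_sup f W 0 d \<omega> \<le> 0} \<union> {\<omega>\<in>space M. gap_sup f W d 1 \<omega> - ?A \<omega> = 0})"
    by (rule finite_measure_mono) measurable
  also have "\<dots> \<le> prob {\<omega>\<in>space M. ?A \<omega> - gap_sup f W 0 d \<omega> \<le> 0} + prob {\<omega>\<in>space M. gap_sup f W d 1 \<omega> - ?A \<omega> = 0}"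
    by (rule measure_Un_le) measurable
  finally show ?thesis
    using gap_sup_tie_after_null[OF v d] by simp
qed

text \<open>As the window [0,d] shrinks, its supremum of the gap path decreases to f 0 < A, so the
  bound of the previous lemma tends to P(A \<le> f 0) = 0.\<close>
lemma gap_sups_tie_null:
  assumes v: "v > 0" and pos: "prob {\<omega>\<in>space M. reflMinus0 f W \<omega> > f 0} = 1"
  shows "prob {\<omega>\<in>space M. gap_sup f W (-1) 0 \<omega> = gap_sup f W 0 1 \<omega>} = 0"
proof -
  let ?A = "gap_sup f W (-1) 0"
  define \<delta> where "\<delta> k = 1 / (real k + 2)" for k :: nat
  have \<delta>: "0 < \<delta> k" "\<delta> k < 1" "\<delta> (Suc k) \<le> \<delta> k" for k
    by (auto simp: \<delta>_def field_simps)
  have \<delta>_lim: "\<delta> \<longlonglongrightarrow> 0"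
    using LIMSEQ_ignore_initial_segment[OF lim_1_over_n[where 'a=real], of 2]
    by (simp add: \<delta>_def[abs_def] add.commute)
  define Z where "Z k \<omega> = ?A \<omega> - gap_sup f W 0 (\<delta> k) \<omega>" for k \<omega>
  have "(\<lambda>k. prob {\<omega>\<in>space M. Z k \<omega> \<le> 0}) \<longlonglongrightarrow> prob {\<omega>\<in>space M. ?A \<omega> - f 0 \<le> 0}"
  proof (rule tendsto_prob_atMost_incseq)
    show "Z k \<in> borel_measurable M" "(\<lambda>\<omega>. ?A \<omega> - f 0) \<in> borel_measurable M" for k
      unfolding Z_def using \<delta>[of k] by (auto intro!: borel_measurable_diff gap_sup_measurable)
    fix \<omega> assume \<omega>: "\<omega> \<in> space M"
    have cont: "continuous_on {0..1} (gap_path f W \<omega>)"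
      using gap_path_continuous[OF \<omega>] by simp
    show "incseq (\<lambda>k. Z k \<omega>)"
    proof (rule incseq_SucI)
      fix k
      have "gap_sup f W 0 (\<delta> (Suc k)) \<omega> \<le> gap_sup f W 0 (\<delta> k) \<omega>"
        unfolding gap_sup_def using \<delta>[of k] \<delta>[of "Suc k"]
        by (intro compact_SUP_subset_mono compact_Icc continuous_on_subset[OF cont]) auto
      then show "Z k \<omega> \<le> Z (Suc k) \<omega>"
        by (simp add: Z_def)
    qed
    have "(\<lambda>k. gap_sup f W 0 (\<delta> k) \<omega>) \<longlonglongrightarrow> gap_path f W \<omega> 0"
      unfolding gap_sup_def using \<delta> by (intro Icc_SUP_shrink_tendsto[OF cont _ \<delta>_lim]) (simp add: less_imp_le)
    then show "(\<lambda>k. Z k \<omega>) \<longlonglongrightarrow> ?A \<omega> - f 0"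
      unfolding Z_def by (intro tendsto_diff tendsto_const) simp
  qed
  moreover have "{\<omega>\<in>space M. ?A \<omega> - f 0 \<le> 0} = space M - {\<omega>\<in>space M. reflMinus0 f W \<omega> > f 0}"
    by (auto simp: reflMinus0_eq_gap_sup)
  moreover have "{\<omega>\<in>space M. reflMinus0 f W \<omega> > f 0} \<in> events"
    unfolding reflMinus0_eq_gap_sup using gap_sup_measurable[of "-1" 0] by measurable
  ultimately have "(\<lambda>k. prob {\<omega>\<in>space M. Z k \<omega> \<le> 0}) \<longlonglongrightarrow> 0"
    using pos by (simp add: prob_compl)
  then have "prob {\<omega>\<in>space M. ?A \<omega> = gap_sup f W 0 1 \<omega>} \<le> 0"
    using gap_sups_tie_le[OF v \<delta>(1,2)] by (intro LIMSEQ_le_const[of _ 0]) (auto simp: Z_def)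
  then show ?thesis
    by (simp add: antisym)
qed

end

lemma gap_sups_distr_eq:
  assumes f: "continuous_on {-1..1} f"
    and bm1: "brownian_motion_on M1 v (-1) 1 W1" and bm2: "brownian_motion_on M2 v (-1) 1 W2"
  shows "distr M1 borel (\<lambda>\<omega>. (gap_sup f W1 (-1) 0 \<omega>, gap_sup f W1 0 1 \<omega>))
       = distr M2 borel (\<lambda>\<omega>. (gap_sup f W2 (-1) 0 \<omega>, gap_sup f W2 0 1 \<omega>))"
proof -
  have approx: "(\<lambda>\<omega>. (dyadic_max (gap_path f W \<omega>) (-1) 0 n, dyadic_max (gap_path f W \<omega>) 0 1 n)) \<in> borel_measurable M"
    "(\<lambda>\<omega>. (gap_sup f W (-1) 0 \<omega>, gap_sup f W 0 1 \<omega>)) \<in> borel_measurable M"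
    "\<omega> \<in> space M \<Longrightarrow> incseq (\<lambda>n. (dyadic_max (gap_path f W \<omega>) (-1) 0 n, dyadic_max (gap_path f W \<omega>) 0 1 n))"
    "\<omega> \<in> space M \<Longrightarrow> (\<lambda>n. (dyadic_max (gap_path f W \<omega>) (-1) 0 n, dyadic_max (gap_path f W \<omega>) 0 1 n))
       \<longlonglongrightarrow> (gap_sup f W (-1) 0 \<omega>, gap_sup f W 0 1 \<omega>)"
    if bm: "brownian_motion_on M v (-1) 1 W" for M and W :: "real \<Rightarrow> 'c \<Rightarrow> real" and n \<omega>
    using dyadic_max_incseq[of "gap_path f W \<omega>"]
    by (auto simp: incseq_def less_eq_prod_def
        intro!: borel_measurable_Pair dyadic_max_gap_measurable[OF f bm] gap_sup_measurable[OF f bm]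
        tendsto_Pair dyadic_max_gap_tendsto[OF f bm])
  show ?thesis
    by (rule distr_eq_of_incseq_limits[OF brownian_motion_onD(1)[OF bm1] brownian_motion_onD(1)[OF bm2]
          approx(1,2)[OF bm1] approx(1,2)[OF bm2] approx(3,4)[OF bm1] approx(3,4)[OF bm2]
          gap_dyadic_maxima_distr_eq[OF bm1 bm2]])
qed

theorem mainTheorem15:
  fixes M :: "'a measure" and v :: real and f :: "real \<Rightarrow> real"
    and Wm Wp :: "real \<Rightarrow> 'a \<Rightarrow> real"
  assumes "v > 0"
    and "continuous_on {-1..1} f" and "f 0 = 0"
    and "brownian_motion_on M v (-1) 1 Wm"
    and "brownian_motion_on M v (-1) 1 Wp"
    and "measure M {\<omega>\<in>space M. reflMinus0 f Wm \<omega> > f 0} = 1"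
  shows "measure M {\<omega>\<in>space M. sigmaMinus f Wm \<omega> < 1}
       + measure M {\<omega>\<in>space M. sigmaPlus f Wp \<omega> > -1} = 1"
proof -
  note f = assms(2) and bmm = assms(4) and bmp = assms(5)
  interpret prob_space M
    by (rule brownian_motion_onD(1)[OF bmm])
  let ?A = "\<lambda>W. gap_sup f W (-1) 0" and ?B = "\<lambda>W. gap_sup f W 0 1"
  have meas: "?A W \<in> borel_measurable M" "?B W \<in> borel_measurable M"
    if "brownian_motion_on M v (-1) 1 W" for W
    using gap_sup_measurable[OF f that] by auto
  have same_law: "prob {\<omega>\<in>space M. (?A Wp \<omega>, ?B Wp \<omega>) \<in> S} = prob {\<omega>\<in>space M. (?A Wm \<omega>, ?B Wm \<omega>) \<in> S}"
    if "S \<in> sets (borel :: (real \<times> real) measure)" for S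
    using measure_eq_if_distr_eq[OF gap_sups_distr_eq[OF f bmp bmm] _ _ that] meas[OF bmm] meas[OF bmp] by simp
  have "{p :: real \<times> real. fst p < snd p} \<in> sets borel" "{p :: real \<times> real. snd p < fst p} \<in> sets borel"
    by (intro borel_open open_Collect_less continuous_intros)+
  from this[THEN same_law] have law:
    "prob {\<omega>\<in>space M. ?A Wp \<omega> < ?B Wp \<omega>} = prob {\<omega>\<in>space M. ?A Wm \<omega> < ?B Wm \<omega>}"
    "prob {\<omega>\<in>space M. ?B Wp \<omega> < ?A Wp \<omega>} = prob {\<omega>\<in>space M. ?B Wm \<omega> < ?A Wm \<omega>}"
    by simp_all
  have "prob {\<omega>\<in>space M. ?A Wm \<omega> = ?B Wm \<omega>} = 0"
    by (rule gap_sups_tie_null[OF f bmm assms(1,6)])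
  then have total: "prob {\<omega>\<in>space M. ?A Wm \<omega> < ?B Wm \<omega>} + prob {\<omega>\<in>space M. ?B Wm \<omega> < ?A Wm \<omega>} = 1"
    using prob_less_add_prob_greater[OF meas[OF bmm]] by simp
  note prob_bounds_if_between_less_le[OF meas[OF bmm] sigmaMinus_event_bounds[OF f bmm]]
    prob_bounds_if_between_less_le[OF meas(2,1)[OF bmp] sigmaPlus_event_bounds[OF f bmp]]
  then show ?thesis
    using law total by linarith
qed

end
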